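(* In the Shepp--Olkin setting with $p_i'\ge0$ for all $i$ and $v=\sum_ip_i'>0$, fix $t$ with $f_k(t)>0$ for all $k$, and let $\alpha_k=\frac{\sum_ip_i'p_i(t)f_{k-1}^{(i)}(t)}{vf_k(t)}$. Then for all $k=0,\ldots,n-2$, $$\alpha_{k+1}(1-\alpha_{k+1})f_{k+1}^2-\alpha_{k+2}(1-\alpha_k)f_kf_{k+2}\ge0$$ (all evaluated at $t$).
   Context: Shepp--Olkin setting: $p_1,\ldots,p_n:[0,1]\to[0,1]$ are affine functions with constant derivatives $p_i'$. $f_k(t)$, $k=0,\ldots,n$, is the probability mass function of a sum of independent Bernoulli variables with parameters $p_1(t),\ldots,p_n(t)$; $f^{(i)}_k(t)$ is the mass function of the sum omitting the $i$-th variable (extended by $0$ outside $\{0,\ldots,n-1\}$). *)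

theory Defs
  imports "HOL-Analysis.Analysis"
begin

text \<open>Mass function at k (an integer) of the sum of independent Bernoulli variables
  with parameters q i, i in S. Zero for k outside 0..card S (automatically, and
  explicitly for negative k).\<close>
definition pbin :: "(nat \<Rightarrow> real) \<Rightarrow> nat set \<Rightarrow> int \<Rightarrow> real" where
  "pbin q S k = (if k < 0 then 0 else
     (\<Sum>A\<in>{A. A \<subseteq> S \<and> card A = nat k}.
        (\<Prod>i\<in>A. q i) * (\<Prod>i\<in>S - A. 1 - q i)))"

definition shepp_olkin_affine :: "nat \<Rightarrow> (nat \<Rightarrow> real \<Rightarrow> real) \<Rightarrow> (nat \<Rightarrow> real) \<Rightarrow> bool" where
  "shepp_olkin_affine n p p' \<longleftrightarrow>
     (\<forall>i<n. (\<exists>c. \<forall>t. p i t = c + p' i * t) \<and>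
            (\<forall>t\<in>{0..1}. p i t \<in> {0..1}))"

definition SO_f :: "nat \<Rightarrow> (nat \<Rightarrow> real \<Rightarrow> real) \<Rightarrow> real \<Rightarrow> int \<Rightarrow> real" where
  "SO_f n p t k = pbin (\<lambda>i. p i t) {..<n} k"

definition SO_fi :: "nat \<Rightarrow> (nat \<Rightarrow> real \<Rightarrow> real) \<Rightarrow> nat \<Rightarrow> real \<Rightarrow> int \<Rightarrow> real" where
  "SO_fi n p i t k = pbin (\<lambda>j. p j t) ({..<n} - {i}) k"

definition SO_alpha :: "nat \<Rightarrow> (nat \<Rightarrow> real \<Rightarrow> real) \<Rightarrow> (nat \<Rightarrow> real) \<Rightarrow> real \<Rightarrow> int \<Rightarrow> real" where
  "SO_alpha n p p' t k =
     (\<Sum>i<n. p' i * p i t * SO_fi n p i t (k - 1)) / ((\<Sum>i<n. p' i) * SO_f n p t k)"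

end

theory Submission
  imports Defs
begin

text \<open>With weights w_i = p_i' and q_i = p_i(t), one has v f_k \<alpha>_k = \<Sum>_i w_i q_i f^(i)_{k-1} and
  v f_k (1 - \<alpha>_k) = \<Sum>_i w_i (1 - q_i) f^(i)_k, so v^2 times the expression is the double sum
  \<Sum>_{i,j} w_i w_j q_i (1 - q_j) (f^(i)_k f^(j)_{k+1} - f^(i)_{k+1} f^(j)_k).
  Pairing (i,j) with (j,i) and expanding f^(i), f^(j) over the mass function g of the sum without
  both variables, each pair contributes w_i w_j (q_i - q_j)^2 (g_k^2 - g_{k-1} g_{k+1}), which is
  nonnegative by log-concavity of Poisson-binomial distributions.\<close>

lemma sum_subsets_insert:
  assumes "finite S" "a \<notin> S"
  shows "(\<Sum>A\<in>{A. A \<subseteq> insert a S \<and> P A}. F A) =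
    (\<Sum>A\<in>{A. A \<subseteq> S \<and> P A}. F A) + (\<Sum>B\<in>{B. B \<subseteq> S \<and> P (insert a B)}. F (insert a B))"
proof -
  have split: "{A. A \<subseteq> insert a S \<and> P A} =
      {A. A \<subseteq> S \<and> P A} \<union> insert a ` {B. B \<subseteq> S \<and> P (insert a B)}"
  proof (intro equalityI subsetI)
    fix A assume A: "A \<in> {A. A \<subseteq> insert a S \<and> P A}"
    show "A \<in> {A. A \<subseteq> S \<and> P A} \<union> insert a ` {B. B \<subseteq> S \<and> P (insert a B)}"
    proof (cases "a \<in> A")
      case True
      then have "A = insert a (A - {a})" by auto
      moreover have "A - {a} \<in> {B. B \<subseteq> S \<and> P (insert a B)}"
        using A calculation by auto
      ultimately show ?thesis by blast
    qed (use A in auto)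
  qed auto
  have "inj_on (insert a) {B. B \<subseteq> S \<and> P (insert a B)}"
    using assms(2) by (auto simp: inj_on_def subset_iff)
  moreover have "finite {A. A \<subseteq> insert a S \<and> P A}" "finite {B. B \<subseteq> S \<and> P (insert a B)}"
    using assms(1) by auto
  ultimately show ?thesis
    unfolding split using assms(2)
    by (subst sum.union_disjoint) (auto simp: sum.reindex)
qed

lemma pbin_empty: "pbin q {} k = (if k = 0 then 1 else 0)"
proof -
  have subsets: "{A. A \<subseteq> {} \<and> card A = nat k} = (if nat k = 0 then {{}} else {})" by auto
  show ?thesis unfolding pbin_def subsets by simp
qed

lemma pbin_insert:
  assumes "finite S" "a \<notin> S"
  shows "pbin q (insert a S) k = q a * pbin q S (k - 1) + (1 - q a) * pbin q S k"
proof (cases "k < 0")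
  case True
  then show ?thesis by (simp add: pbin_def)
next
  case False
  have finB: "finite B" if "B \<subseteq> S" for B
    using assms(1) that by (rule finite_subset[rotated])
  have off: "(\<Prod>i\<in>A. q i) * (\<Prod>i\<in>insert a S - A. 1 - q i) =
      (1 - q a) * ((\<Prod>i\<in>A. q i) * (\<Prod>i\<in>S - A. 1 - q i))" if "A \<subseteq> S" for A
  proof -
    have "insert a S - A = insert a (S - A)" "a \<notin> S - A" using that assms(2) by auto
    then show ?thesis using assms(1) by simp
  qed
  have on: "(\<Prod>i\<in>insert a B. q i) * (\<Prod>i\<in>insert a S - insert a B. 1 - q i) =
      q a * ((\<Prod>i\<in>B. q i) * (\<Prod>i\<in>S - B. 1 - q i))" if "B \<subseteq> S" for B
  proof -
    have "a \<notin> B" "insert a S - insert a B = S - B" using that assms(2) by auto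
    then show ?thesis using finB[OF that] by simp
  qed
  have card_on: "card (insert a B) = nat k \<longleftrightarrow> 0 < k \<and> card B = nat (k - 1)" if "B \<subseteq> S" for B
  proof -
    have "a \<notin> B" using that assms(2) by auto
    then show ?thesis using finB[OF that] False by auto
  qed
  let ?F = "\<lambda>A. (\<Prod>i\<in>A. q i) * (\<Prod>i\<in>insert a S - A. 1 - q i)"
  have "pbin q (insert a S) k = (\<Sum>A\<in>{A. A \<subseteq> S \<and> card A = nat k}. ?F A) +
      (\<Sum>B\<in>{B. B \<subseteq> S \<and> card (insert a B) = nat k}. ?F (insert a B))"
    using False by (simp only: pbin_def sum_subsets_insert[OF assms] if_False)
  also have "(\<Sum>A\<in>{A. A \<subseteq> S \<and> card A = nat k}. ?F A) = (1 - q a) * pbin q S k"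
    using False by (simp add: pbin_def sum_distrib_left off)
  also have "{B. B \<subseteq> S \<and> card (insert a B) = nat k} =
      (if 0 < k then {B. B \<subseteq> S \<and> card B = nat (k - 1)} else {})"
    using card_on by auto
  also have "(\<Sum>B\<in>\<dots>. ?F (insert a B)) = q a * pbin q S (k - 1)"
  proof (cases "0 < k")
    case True
    have "(\<Sum>B\<in>{B. B \<subseteq> S \<and> card B = nat (k - 1)}. ?F (insert a B)) =
        (\<Sum>B\<in>{B. B \<subseteq> S \<and> card B = nat (k - 1)}. q a * ((\<Prod>i\<in>B. q i) * (\<Prod>i\<in>S - B. 1 - q i)))"
      using on by (intro sum.cong) auto
    then show ?thesis using True by (simp add: pbin_def sum_distrib_left)
  qed (simp add: pbin_def)
  finally show ?thesis by simp
qed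

lemma pbin_log_concave_gen:
  assumes "finite S" "\<forall>i\<in>S. 0 \<le> q i \<and> q i \<le> 1" "m \<le> l"
  shows "pbin q S (m - 1) * pbin q S (l + 1) \<le> pbin q S m * pbin q S l"
  using assms
proof (induction S arbitrary: m l rule: finite_induct)
  case empty
  then show ?case by (auto simp: pbin_empty)
next
  case (insert a S)
  define h where "h = pbin q S"
  have qa: "0 \<le> q a" "0 \<le> 1 - q a" using insert.prems by auto
  have IH: "h (m - 1) * h (l + 1) \<le> h m * h l" if "m \<le> l" for m l
    using insert.IH insert.prems(1) that by (simp add: h_def)
  have X: "h (m - 2) * h l \<le> h (m - 1) * h (l - 1)"
    using IH[of "m - 1" "l - 1"] insert.prems(2) by (simp add: algebra_simps)
  have Y: "h (m - 1) * h (l + 1) \<le> h m * h l"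
    using IH insert.prems(2) by simp
  have Z: "h (m - 2) * h (l + 1) \<le> h m * h (l - 1)"
  proof (cases "m = l")
    case True
    then show ?thesis using IH[of "l - 1" l] by (simp add: algebra_simps)
  next
    case False
    then have "h (m - 1) * h l \<le> h m * h (l - 1)"
      using IH[of m "l - 1"] insert.prems(2) by simp
    moreover have "h (m - 2) * h (l + 1) \<le> h (m - 1) * h l"
      using IH[of "m - 1" l] insert.prems(2) by (simp add: algebra_simps)
    ultimately show ?thesis by linarith
  qed
  have "pbin q (insert a S) m * pbin q (insert a S) l
      - pbin q (insert a S) (m - 1) * pbin q (insert a S) (l + 1)
    = (q a)\<^sup>2 * (h (m - 1) * h (l - 1) - h (m - 2) * h l)
      + (1 - q a)\<^sup>2 * (h m * h l - h (m - 1) * h (l + 1))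
      + q a * (1 - q a) * (h m * h (l - 1) - h (m - 2) * h (l + 1))"
    unfolding pbin_insert[OF insert.hyps] h_def[symmetric]
    by (simp add: algebra_simps power2_eq_square)
  also have "\<dots> \<ge> 0"
    using X Y Z qa by (intro add_nonneg_nonneg mult_nonneg_nonneg) auto
  finally show ?case by simp
qed

lemma pbin_log_concave:
  assumes "finite S" "\<forall>i\<in>S. 0 \<le> q i \<and> q i \<le> 1"
  shows "pbin q S (k - 1) * pbin q S (k + 1) \<le> (pbin q S k)\<^sup>2"
  using pbin_log_concave_gen[OF assms order_refl] by (simp add: power2_eq_square)

lemma pbin_remove:
  assumes "finite S" "i \<in> S"
  shows "pbin q S k = q i * pbin q (S - {i}) (k - 1) + (1 - q i) * pbin q (S - {i}) k"
  using pbin_insert[of "S - {i}" i q k] assms by (simp add: insert_absorb)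

lemma pbin_remove_exchange_nonneg:
  assumes "finite S" "\<forall>l\<in>S. 0 \<le> q l \<and> q l \<le> 1" "i \<in> S" "j \<in> S"
  defines "g \<equiv> \<lambda>l. pbin q (S - {l})"
  shows "0 \<le> q i * (1 - q j) * (g i k * g j (k + 1) - g i (k + 1) * g j k)
           + q j * (1 - q i) * (g j k * g i (k + 1) - g j (k + 1) * g i k)"
proof (cases "i = j")
  case False
  define h where "h = pbin q (S - {i} - {j})"
  have gi: "g i m = q j * h (m - 1) + (1 - q j) * h m" for m
    using pbin_remove[of "S - {i}" j q m] assms(1,4) False by (simp add: g_def h_def)
  have gj: "g j m = q i * h (m - 1) + (1 - q i) * h m" for m
    using pbin_remove[of "S - {j}" i q m] assms(1,3) False
    by (simp add: g_def h_def Diff_insert2[symmetric] insert_commute)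
  have "q i * (1 - q j) * (g i k * g j (k + 1) - g i (k + 1) * g j k)
      + q j * (1 - q i) * (g j k * g i (k + 1) - g j (k + 1) * g i k)
      = (q i - q j)\<^sup>2 * ((h k)\<^sup>2 - h (k - 1) * h (k + 1))"
    unfolding gi gj by (simp add: algebra_simps power2_eq_square)
  moreover have "h (k - 1) * h (k + 1) \<le> (h k)\<^sup>2"
    unfolding h_def using assms(1,2) by (intro pbin_log_concave) auto
  ultimately show ?thesis by simp
qed simp

lemma sum_sum_nonneg_of_swap_nonneg:
  fixes T :: "'a \<Rightarrow> 'a \<Rightarrow> 'b::linordered_idom"
  assumes "\<And>i j. i \<in> I \<Longrightarrow> j \<in> I \<Longrightarrow> 0 \<le> T i j + T j i"
  shows "0 \<le> (\<Sum>i\<in>I. \<Sum>j\<in>I. T i j)"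
proof -
  have "2 * (\<Sum>i\<in>I. \<Sum>j\<in>I. T i j) = (\<Sum>i\<in>I. \<Sum>j\<in>I. T i j + T j i)"
    using sum.swap[of T I I] by (simp add: sum.distrib)
  also have "\<dots> \<ge> 0"
    using assms by (intro sum_nonneg) auto
  finally show ?thesis by (simp add: zero_le_mult_iff)
qed

text \<open>For weights w = p', pbin_on / ((\<Sum>w) * pbin) is the paper's \<alpha>_k and
  pbin_off / ((\<Sum>w) * pbin) is 1 - \<alpha>_k.\<close>

definition pbin_on :: "(nat \<Rightarrow> real) \<Rightarrow> (nat \<Rightarrow> real) \<Rightarrow> nat set \<Rightarrow> int \<Rightarrow> real" where
  "pbin_on w q S k = (\<Sum>i\<in>S. w i * q i * pbin q (S - {i}) (k - 1))"

definition pbin_off :: "(nat \<Rightarrow> real) \<Rightarrow> (nat \<Rightarrow> real) \<Rightarrow> nat set \<Rightarrow> int \<Rightarrow> real" where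
  "pbin_off w q S k = (\<Sum>i\<in>S. w i * (1 - q i) * pbin q (S - {i}) k)"

lemma sum_mult_pbin_eq_on_plus_off:
  assumes "finite S"
  shows "(\<Sum>i\<in>S. w i) * pbin q S k = pbin_on w q S k + pbin_off w q S k"
proof -
  have "(\<Sum>i\<in>S. w i) * pbin q S k
      = (\<Sum>i\<in>S. w i * (q i * pbin q (S - {i}) (k - 1) + (1 - q i) * pbin q (S - {i}) k))"
    unfolding sum_distrib_right using pbin_remove[OF assms] by (intro sum.cong) auto
  then show ?thesis
    by (simp add: pbin_on_def pbin_off_def sum.distrib[symmetric] algebra_simps)
qed

lemma pbin_on_off_exchange_nonneg:
  assumes "finite S" "\<forall>i\<in>S. 0 \<le> q i \<and> q i \<le> 1" "\<forall>i\<in>S. 0 \<le> w i"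
  shows "0 \<le> pbin_on w q S (k + 1) * pbin_off w q S (k + 1) - pbin_on w q S (k + 2) * pbin_off w q S k"
proof -
  define g where "g = (\<lambda>l. pbin q (S - {l}))"
  define T where "T = (\<lambda>i j. w i * w j * (q i * (1 - q j)) * (g i k * g j (k + 1) - g i (k + 1) * g j k))"
  have "pbin_on w q S (k + 1) * pbin_off w q S (k + 1) - pbin_on w q S (k + 2) * pbin_off w q S k
      = (\<Sum>i\<in>S. \<Sum>j\<in>S. T i j)"
    unfolding pbin_on_def pbin_off_def sum_product T_def g_def
    by (simp add: sum_subtractf[symmetric] algebra_simps)
  also have "\<dots> \<ge> 0"
  proof (rule sum_sum_nonneg_of_swap_nonneg)
    fix i j assume ij: "i \<in> S" "j \<in> S"
    have "T i j + T j i = w i * w j *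
        (q i * (1 - q j) * (g i k * g j (k + 1) - g i (k + 1) * g j k)
         + q j * (1 - q i) * (g j k * g i (k + 1) - g j (k + 1) * g i k))"
      by (simp add: T_def algebra_simps)
    then show "0 \<le> T i j + T j i"
      using pbin_remove_exchange_nonneg[OF assms(1,2) ij, of k] assms(3) ij
      by (simp add: g_def)
  qed
  finally show ?thesis .
qed

lemma SO_alpha_expression_eq:
  fixes n :: nat and p :: "nat \<Rightarrow> real \<Rightarrow> real" and p' :: "nat \<Rightarrow> real" and t :: real and k :: int
  defines "q \<equiv> \<lambda>i. p i t" and "v \<equiv> \<Sum>i<n. p' i"
  assumes "v > 0" "SO_f n p t k > 0" "SO_f n p t (k + 1) > 0" "SO_f n p t (k + 2) > 0"
  shows "SO_alpha n p p' t (k + 1) * (1 - SO_alpha n p p' t (k + 1)) * (SO_f n p t (k + 1))\<^sup>2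
      - SO_alpha n p p' t (k + 2) * (1 - SO_alpha n p p' t k) * SO_f n p t k * SO_f n p t (k + 2)
    = (pbin_on p' q {..<n} (k + 1) * pbin_off p' q {..<n} (k + 1)
       - pbin_on p' q {..<n} (k + 2) * pbin_off p' q {..<n} k) / v\<^sup>2"
proof -
  let ?on = "pbin_on p' q {..<n}" and ?off = "pbin_off p' q {..<n}" and ?f = "SO_f n p t"
  have alpha: "SO_alpha n p p' t m = ?on m / (v * ?f m)" for m
    by (simp add: SO_alpha_def pbin_on_def SO_fi_def SO_f_def q_def v_def)
  have one_minus_alpha: "1 - SO_alpha n p p' t m = ?off m / (v * ?f m)" if "?f m > 0" for m
  proof -
    have "v * ?f m = ?on m + ?off m"
      using sum_mult_pbin_eq_on_plus_off[of "{..<n}" p' q m] by (simp add: SO_f_def q_def v_def)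
    moreover have "v * ?f m \<noteq> 0" using that assms(3) by simp
    ultimately show ?thesis by (simp add: alpha field_simps)
  qed
  have ratio_identity: "a1 / (v * y) * (b1 / (v * y)) * y\<^sup>2 - a2 / (v * z) * (b0 / (v * x)) * x * z
      = (a1 * b1 - a2 * b0) / v\<^sup>2" if "x \<noteq> 0" "y \<noteq> 0" "z \<noteq> 0" for a1 b1 a2 b0 x y z :: real
    using that assms(3) by (simp add: field_simps power2_eq_square)
  show ?thesis
    unfolding one_minus_alpha[OF assms(4)] one_minus_alpha[OF assms(5)] unfolding alpha
    by (rule ratio_identity) (use assms(4-6) in auto)
qed

theorem proposition5p4:
  fixes n :: nat and p :: "nat \<Rightarrow> real \<Rightarrow> real" and p' :: "nat \<Rightarrow> real" and t :: real
  assumes "shepp_olkin_affine n p p'"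
    and "\<forall>i<n. p' i \<ge> 0"
    and "(\<Sum>i<n. p' i) > 0"
    and "t \<in> {0..1}"
    and "\<forall>k::int. 0 \<le> k \<and> k \<le> int n \<longrightarrow> SO_f n p t k > 0"
  shows "\<forall>k::int. 0 \<le> k \<and> k \<le> int n - 2 \<longrightarrow>
    SO_alpha n p p' t (k + 1) * (1 - SO_alpha n p p' t (k + 1)) * (SO_f n p t (k + 1))\<^sup>2
    - SO_alpha n p p' t (k + 2) * (1 - SO_alpha n p p' t k) * SO_f n p t k * SO_f n p t (k + 2) \<ge> 0"
proof (intro allI impI)
  fix k :: int assume k: "0 \<le> k \<and> k \<le> int n - 2"
  have q: "\<forall>i\<in>{..<n}. 0 \<le> p i t \<and> p i t \<le> 1"
    using assms(1,4) by (auto simp: shepp_olkin_affine_def)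
  have "0 \<le> pbin_on p' (\<lambda>i. p i t) {..<n} (k + 1) * pbin_off p' (\<lambda>i. p i t) {..<n} (k + 1)
      - pbin_on p' (\<lambda>i. p i t) {..<n} (k + 2) * pbin_off p' (\<lambda>i. p i t) {..<n} k"
    using q assms(2) by (intro pbin_on_off_exchange_nonneg) auto
  then show "SO_alpha n p p' t (k + 1) * (1 - SO_alpha n p p' t (k + 1)) * (SO_f n p t (k + 1))\<^sup>2
      - SO_alpha n p p' t (k + 2) * (1 - SO_alpha n p p' t k) * SO_f n p t k * SO_f n p t (k + 2) \<ge> 0"
    using assms(3,5) k by (subst SO_alpha_expression_eq) auto
qed

end
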